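(* Let $G$ be a vigorous subgroup of $\operatorname{Homeo}(\mathfrak{C})$ generated by its elements of small support. Let $B,C,D\in K_{\mathfrak{C}}$ be pairwise disjoint with $B\cup C\cup D=\mathfrak{C}$. Let $\delta\in\operatorname{pstab}_G(D)$ satisfy $B\delta\subsetneq B$. Let $\varepsilon:\mathfrak{C}\to\mathfrak{C}$ be the injective map agreeing with $\delta$ on $B$ and equal to the identity on $C\cup D$. Let $f:\operatorname{Homeo}(\mathfrak{C})\to\operatorname{Homeo}(\mathfrak{C})$ send $\gamma$ to the homeomorphism which, for $p\in\mathfrak{C}\varepsilon$, maps $p$ to $((p\varepsilon^{-1})\gamma)\varepsilon$, and fixes every point of $\mathfrak{C}\setminus\mathfrak{C}\varepsilon$. Then $f|_G$ is an isomorphism from $G$ onto $\operatorname{pstab}_G(\mathfrak{C}\setminus\mathfrak{C}\varepsilon)$.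
   Context: $\mathfrak{C}$ denotes a Cantor space (a space homeomorphic to $\{0,1\}^\omega$). Groups of homeomorphisms act on the right, and products are composed left to right. $K_{\mathfrak{C}}$ denotes the set of non-empty proper clopen subsets of $\mathfrak{C}$. For $\gamma\in\operatorname{Homeo}(\mathfrak{C})$, $\operatorname{supp}(\gamma)=\{p\in\mathfrak{C}: p\gamma\neq p\}$. For $G\le\operatorname{Homeo}(\mathfrak{C})$ and $A\subseteq\mathfrak{C}$, $\operatorname{pstab}_G(A)=\{g\in G: pg=p \text{ for all } p\in A\}$. A subset $S\subseteq \operatorname{Homeo}(\mathfrak{C})$ is vigorous if for all clopen $A,B,C\subseteq\mathfrak{C}$ with $B,C$ non-empty proper subsets of $A$ there is $\gamma\in S$ with $\operatorname{supp}(\gamma)\subseteq A$ and $B\gamma\subseteq C$. $G$ is generated by its elements of small support if $G$ is generated by $\{\gamma\in G: \operatorname{supp}(\gamma)\subseteq A \text{ for some } A\in K_{\mathfrak{C}}\}$. *)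

theory Defs
  imports "HOL-Analysis.Analysis" "HOL-Algebra.Algebra"
begin

type_synonym cpt = "nat \<Rightarrow> bool"

definition cantor :: "cpt topology" where
  "cantor = product_topology (\<lambda>_. discrete_topology (UNIV :: bool set)) UNIV"

text \<open>Homeo(C) as a group; maps act on the right, products compose left to right,
  so the product g h is "first g, then h", i.e. h o g.\<close>
definition Homeo :: "(cpt \<Rightarrow> cpt) monoid" where
  "Homeo = \<lparr>carrier = {h. homeomorphic_map cantor cantor h}, mult = (\<lambda>g h. h \<circ> g), one = id\<rparr>"

definition clopen_C :: "cpt set \<Rightarrow> bool" where
  "clopen_C A \<longleftrightarrow> openin cantor A \<and> closedin cantor A"

definition K_C :: "cpt set set" where
  "K_C = {A. clopen_C A \<and> A \<noteq> {} \<and> A \<noteq> topspace cantor}"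

definition supp :: "(cpt \<Rightarrow> cpt) \<Rightarrow> cpt set" where
  "supp g = {p. g p \<noteq> p}"

definition pstab :: "(cpt \<Rightarrow> cpt) set \<Rightarrow> cpt set \<Rightarrow> (cpt \<Rightarrow> cpt) set" where
  "pstab G A = {g \<in> G. \<forall>p\<in>A. g p = p}"

definition vigorous :: "(cpt \<Rightarrow> cpt) set \<Rightarrow> bool" where
  "vigorous S \<longleftrightarrow> (\<forall>A B C. clopen_C A \<and> clopen_C B \<and> clopen_C C
      \<and> B \<noteq> {} \<and> C \<noteq> {} \<and> B \<subset> A \<and> C \<subset> A
      \<longrightarrow> (\<exists>g\<in>S. supp g \<subseteq> A \<and> g ` B \<subseteq> C))"

definition gen_by_small_support :: "(cpt \<Rightarrow> cpt) set \<Rightarrow> bool" where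
  "gen_by_small_support G \<longleftrightarrow>
     G = generate Homeo {g \<in> G. \<exists>A\<in>K_C. supp g \<subseteq> A}"

end

theory Submission
  imports Defs
begin

text \<open>The map \<open>f\<close> is conjugation by the injection \<open>\<epsilon>\<close> (which is \<open>\<delta>\<close> on \<open>B \<union> D\<close> and the
  identity on \<open>C\<close>), extended by the identity off \<open>range \<epsilon>\<close>; so it is an injective homomorphism
  into the pointwise stabiliser of \<open>- range \<epsilon>\<close>, and the content is that it maps \<open>G\<close> into \<open>G\<close> and
  onto that stabiliser. On homeomorphisms fixing \<open>B\<close> pointwise \<open>f\<close> is the identity, and on those
  fixing \<open>C\<close> pointwise it is conjugation by \<open>\<delta>\<close>. Vigorousness yields, for an element of small
  support, a conjugator \<open>h\<close> with \<open>f h \<in> G\<close> moving \<open>C\<close> off that support, which reduces it to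
  the second case; as such elements generate \<open>G\<close>, \<open>f\<close> maps \<open>G\<close> into \<open>G\<close>. Conversely, \<open>\<sigma>\<close> in
  the stabiliser is \<open>f \<gamma>\<close> for \<open>\<gamma> = \<epsilon>\<^sup>-\<^sup>1 \<sigma> \<epsilon>\<close>. Precomposing \<open>\<gamma>\<close> with an element of \<open>G\<close> moving \<open>C\<close>
  into \<open>\<gamma>\<^sup>-\<^sup>1 C\<close> makes it agree with its image under \<open>f\<close> on \<open>C\<close>, so the two differ by an element
  fixing \<open>C\<close> pointwise, which lies in \<open>G\<close> by the conjugation case.\<close>

lemma topspace_cantor [simp]: "topspace cantor = UNIV"
  unfolding cantor_def by (simp add: topspace_product_topology PiE_UNIV_domain)

lemma carrier_Homeo: "h \<in> carrier Homeo \<longleftrightarrow> homeomorphic_map cantor cantor h"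
  by (simp add: Homeo_def)

lemma mult_Homeo [simp]: "g \<otimes>\<^bsub>Homeo\<^esub> h = h \<circ> g"
  by (simp add: Homeo_def)

lemma one_Homeo [simp]: "\<one>\<^bsub>Homeo\<^esub> = id"
  by (simp add: Homeo_def)

lemma Homeo_imp_bij: "h \<in> carrier Homeo \<Longrightarrow> bij h"
  unfolding carrier_Homeo bij_def
  by (metis homeomorphic_imp_injective_map homeomorphic_imp_surjective_map topspace_cantor)

lemma inv_into_in_Homeo:
  assumes "h \<in> carrier Homeo" shows "inv_into UNIV h \<in> carrier Homeo"
proof -
  obtain g where g: "homeomorphic_maps cantor cantor h g"
    using assms homeomorphic_map_maps carrier_Homeo by blast
  then have "inv_into UNIV h = g"
    by (intro inv_equality) (auto simp: homeomorphic_maps_map)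
  with g show ?thesis by (auto simp: carrier_Homeo homeomorphic_maps_map)
qed

lemma group_Homeo: "group Homeo"
proof (rule groupI)
  fix x assume x: "x \<in> carrier Homeo"
  have "x \<circ> inv_into UNIV x = id"
    using Homeo_imp_bij[OF x] by (simp add: fun_eq_iff bij_is_surj surj_f_inv_f)
  then show "\<exists>y\<in>carrier Homeo. y \<otimes>\<^bsub>Homeo\<^esub> x = \<one>\<^bsub>Homeo\<^esub>"
    using inv_into_in_Homeo[OF x] by auto
next
  fix x y assume "x \<in> carrier Homeo" "y \<in> carrier Homeo"
  then show "x \<otimes>\<^bsub>Homeo\<^esub> y \<in> carrier Homeo"
    unfolding carrier_Homeo mult_Homeo by (rule homeomorphic_map_compose)
qed (simp_all add: carrier_Homeo comp_assoc)

lemma inv_Homeo: "h \<in> carrier Homeo \<Longrightarrow> inv\<^bsub>Homeo\<^esub> h = inv_into UNIV h"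
  by (rule group.inv_equality[OF group_Homeo])
     (auto simp: inv_into_in_Homeo fun_eq_iff Homeo_imp_bij bij_is_surj surj_f_inv_f)

lemma subgroup_Homeo_comp: "subgroup G Homeo \<Longrightarrow> g \<in> G \<Longrightarrow> h \<in> G \<Longrightarrow> h \<circ> g \<in> G"
  by (metis mult_Homeo subgroup.m_closed)

lemma subgroup_Homeo_id: "subgroup G Homeo \<Longrightarrow> id \<in> G"
  by (metis one_Homeo subgroup.one_closed)

lemma subgroup_Homeo_bij: "subgroup G Homeo \<Longrightarrow> g \<in> G \<Longrightarrow> bij g"
  using subgroup.subset Homeo_imp_bij by blast

lemma subgroup_Homeo_inv_into: "subgroup G Homeo \<Longrightarrow> g \<in> G \<Longrightarrow> inv_into UNIV g \<in> G"
  by (metis inv_Homeo subgroup.m_inv_closed subgroup.mem_carrier)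

lemma clopen_C_Int: "clopen_C A \<Longrightarrow> clopen_C B \<Longrightarrow> clopen_C (A \<inter> B)"
  unfolding clopen_C_def by auto

lemma clopen_C_Un: "clopen_C A \<Longrightarrow> clopen_C B \<Longrightarrow> clopen_C (A \<union> B)"
  unfolding clopen_C_def by auto

lemma clopen_C_Compl: "clopen_C A \<Longrightarrow> clopen_C (- A)"
  unfolding clopen_C_def by (metis Compl_eq_Diff_UNIV closedin_def openin_closedin_eq topspace_cantor)

lemma clopen_C_UNIV: "clopen_C UNIV"
  unfolding clopen_C_def by (metis closedin_topspace openin_topspace topspace_cantor)

lemma clopen_C_vimage:
  assumes "h \<in> carrier Homeo" "clopen_C U" shows "clopen_C (h -` U)"
proof -
  have h: "continuous_map cantor cantor h"
    using assms(1) by (simp add: carrier_Homeo homeomorphic_imp_continuous_map)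
  have "h -` U = {x \<in> topspace cantor. h x \<in> U}"
    by auto
  then show ?thesis
    using openin_continuous_map_preimage[OF h] closedin_continuous_map_preimage[OF h] assms(2)
    unfolding clopen_C_def by simp
qed

lemma vigorousE:
  assumes "vigorous G" "clopen_C A" "clopen_C U" "clopen_C V" "U \<noteq> {}" "V \<noteq> {}" "U \<subset> A" "V \<subset> A"
  obtains g where "g \<in> G" "\<And>p. p \<notin> A \<Longrightarrow> g p = p" "g ` U \<subseteq> V"
proof -
  have "\<exists>g\<in>G. supp g \<subseteq> A \<and> g ` U \<subseteq> V"
    using assms(1)[unfolded vigorous_def, rule_format, of A U V] assms(2-) by blast
  then show ?thesis using that unfolding supp_def by blast
qed

lemma inj_fixing_pointwise_notin:
  assumes "inj h" "\<And>p. p \<in> A \<Longrightarrow> h p = p" "p \<notin> A" shows "h p \<notin> A"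
  using assms by (metis injD)

locale eps_conjugation =
  fixes G :: "(cpt \<Rightarrow> cpt) set" and B C D :: "cpt set" and \<delta> \<epsilon> :: "cpt \<Rightarrow> cpt"
    and f :: "(cpt \<Rightarrow> cpt) \<Rightarrow> (cpt \<Rightarrow> cpt)"
  assumes subgroup: "subgroup G Homeo"
    and K_C_B: "B \<in> K_C" and K_C_C: "C \<in> K_C" and K_C_D: "D \<in> K_C"
    and disjoint_BC: "B \<inter> C = {}" and disjoint_BD: "B \<inter> D = {}" and disjoint_CD: "C \<inter> D = {}"
    and partition: "B \<union> C \<union> D = topspace cantor"
    and \<delta>_pstab: "\<delta> \<in> pstab G D"
    and \<delta>_B: "\<delta> ` B \<subseteq> B"
    and \<epsilon>_def: "\<epsilon> = (\<lambda>p. if p \<in> B then \<delta> p else p)"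
    and f_def: "f = (\<lambda>\<gamma> p. if p \<in> range \<epsilon> then \<epsilon> (\<gamma> (inv_into UNIV \<epsilon> p)) else p)"
begin

lemmas G_comp = subgroup_Homeo_comp[OF subgroup]
  and G_id = subgroup_Homeo_id[OF subgroup]
  and G_bij = subgroup_Homeo_bij[OF subgroup]
  and G_inv_into = subgroup_Homeo_inv_into[OF subgroup]

lemma G_carrier: "g \<in> G \<Longrightarrow> g \<in> carrier Homeo"
  by (rule subgroup.mem_carrier[OF subgroup])

lemma G_inj: "g \<in> G \<Longrightarrow> inj g"
  by (simp add: G_bij bij_is_inj)

lemma UNIV_eq_BCD: "B \<union> C \<union> D = UNIV"
  using partition by simp

lemma B_clopen: "clopen_C B" and B_nonempty: "B \<noteq> {}"
  and C_clopen: "clopen_C C" and C_nonempty: "C \<noteq> {}"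
  and D_clopen: "clopen_C D" and D_nonempty: "D \<noteq> {}"
  using K_C_B K_C_C K_C_D by (auto simp: K_C_def)

lemma \<delta>_in_G: "\<delta> \<in> G" and \<delta>_D: "p \<in> D \<Longrightarrow> \<delta> p = p"
  using \<delta>_pstab by (auto simp: pstab_def)

lemma bij_\<delta>: "bij \<delta>"
  by (rule G_bij[OF \<delta>_in_G])

lemma \<epsilon>_BD: "q \<in> B \<union> D \<Longrightarrow> \<epsilon> q = \<delta> q"
  using \<delta>_D by (auto simp: \<epsilon>_def)

lemma \<epsilon>_notin_B: "q \<notin> B \<Longrightarrow> \<epsilon> q = q"
  by (simp add: \<epsilon>_def)

lemma inj_\<epsilon>: "inj \<epsilon>"
proof (rule injI)
  fix x y assume "\<epsilon> x = \<epsilon> y"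
  then show "x = y"
    using \<delta>_B bij_is_inj[OF bij_\<delta>] unfolding \<epsilon>_def by (auto split: if_splits dest: injD)
qed

lemma range_\<epsilon>: "range \<epsilon> = C \<union> \<delta> ` (B \<union> D)"
proof -
  have "range \<epsilon> = \<epsilon> ` C \<union> \<epsilon> ` (B \<union> D)"
    using UNIV_eq_BCD by (simp add: Un_ac flip: image_Un)
  moreover have "\<epsilon> ` C = C"
    using disjoint_BC \<epsilon>_notin_B by force
  moreover have "\<epsilon> ` (B \<union> D) = \<delta> ` (B \<union> D)"
    using \<epsilon>_BD by (rule image_cong[OF refl])
  ultimately show ?thesis by simp
qed

lemma \<delta>_BD: "\<delta> ` (B \<union> D) \<subseteq> B \<union> D"
  using \<delta>_B \<delta>_D by auto

lemma inv_\<delta>_in_C: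
  assumes "p \<notin> \<delta> ` (B \<union> D)" shows "inv_into UNIV \<delta> p \<in> C"
proof -
  have "\<delta> (inv_into UNIV \<delta> p) = p"
    using bij_\<delta> by (simp add: bij_is_surj surj_f_inv_f)
  then have "inv_into UNIV \<delta> p \<notin> B \<union> D"
    using assms by force
  then show ?thesis using UNIV_eq_BCD by blast
qed

lemma notin_B_in_range_\<epsilon>: "p \<notin> B \<Longrightarrow> p \<in> range \<epsilon>"
  by (metis \<epsilon>_notin_B rangeI)

lemma inv_\<epsilon>_C: "p \<in> C \<Longrightarrow> inv_into UNIV \<epsilon> p = p"
  using disjoint_BC inj_\<epsilon> \<epsilon>_notin_B by (metis disjoint_iff inv_f_f)

lemma f_apply: "f \<gamma> p = (if p \<in> range \<epsilon> then \<epsilon> (\<gamma> (inv_into UNIV \<epsilon> p)) else p)"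
  by (simp add: f_def)

lemma f_\<epsilon>: "f \<gamma> (\<epsilon> q) = \<epsilon> (\<gamma> q)"
  by (simp add: f_apply inj_\<epsilon>)

lemma f_eqI:
  assumes "\<And>q. k (\<epsilon> q) = \<epsilon> (h q)" "\<And>p. p \<notin> range \<epsilon> \<Longrightarrow> k p = p"
  shows "f h = k"
proof
  fix p show "f h p = k p"
    using assms by (cases "p \<in> range \<epsilon>") (auto simp: f_apply inj_\<epsilon>)
qed

lemma f_comp: "f (\<gamma> \<circ> \<gamma>') = f \<gamma> \<circ> f \<gamma>'"
  by (rule f_eqI) (simp add: f_\<epsilon>, simp add: f_apply)

lemma f_id: "f id = id"
  by (rule f_eqI) simp_all

lemma f_inv_into:
  assumes "bij \<gamma>" shows "f (inv_into UNIV \<gamma>) = inv_into UNIV (f \<gamma>)"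
proof -
  have "\<gamma> \<circ> inv_into UNIV \<gamma> = id" "inv_into UNIV \<gamma> \<circ> \<gamma> = id"
    using bij_is_surj[OF assms, THEN surj_iff[THEN iffD1]] inv_o_cancel[OF bij_is_inj[OF assms]]
    by simp_all
  then show ?thesis by (metis f_comp f_id inv_unique_comp)
qed

lemma inj_f: "inj f"
proof (rule injI)
  fix \<gamma> \<gamma>' assume "f \<gamma> = f \<gamma>'"
  then have "\<epsilon> (\<gamma> q) = \<epsilon> (\<gamma>' q)" for q
    by (metis f_\<epsilon>)
  then show "\<gamma> = \<gamma>'"
    using inj_\<epsilon> by (simp add: inj_eq ext)
qed

lemma f_fixing_B:
  assumes "inj h" "\<And>p. p \<in> B \<Longrightarrow> h p = p"
  shows "f h = h"
proof (rule f_eqI)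
  show "h (\<epsilon> q) = \<epsilon> (h q)" for q
  proof (cases "q \<in> B")
    case True
    then show ?thesis using \<delta>_B assms(2) by (auto simp: \<epsilon>_def)
  next
    case False
    then show ?thesis using inj_fixing_pointwise_notin[OF assms] \<epsilon>_notin_B by simp
  qed
  show "h p = p" if "p \<notin> range \<epsilon>" for p
    using that assms(2) \<epsilon>_notin_B by (metis rangeI)
qed

lemma f_fixing_C:
  assumes "inj h" "\<And>p. p \<in> C \<Longrightarrow> h p = p"
  shows "f h = \<delta> \<circ> h \<circ> inv_into UNIV \<delta>"
proof (rule f_eqI)
  have \<delta>_inv: "\<delta> (inv_into UNIV \<delta> p) = p" for p
    using bij_\<delta> by (simp add: bij_is_surj surj_f_inv_f)
  show "(\<delta> \<circ> h \<circ> inv_into UNIV \<delta>) (\<epsilon> q) = \<epsilon> (h q)" for q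
  proof (cases "q \<in> C")
    case True
    then have "q \<notin> \<delta> ` (B \<union> D)"
      using \<delta>_BD disjoint_BC disjoint_CD by blast
    then show ?thesis
      using True inv_\<delta>_in_C assms(2) \<delta>_inv disjoint_BC \<epsilon>_notin_B by force
  next
    case False
    then have "q \<in> B \<union> D" "h q \<in> B \<union> D"
      using inj_fixing_pointwise_notin[OF assms] UNIV_eq_BCD by blast+
    then show ?thesis using \<epsilon>_BD bij_is_inj[OF bij_\<delta>] by simp
  qed
  show "(\<delta> \<circ> h \<circ> inv_into UNIV \<delta>) p = p" if "p \<notin> range \<epsilon>" for p
    using that inv_\<delta>_in_C assms(2) \<delta>_inv by (simp add: range_\<epsilon>)
qed

lemma f_in_G_if_fixing_B: "h \<in> G \<Longrightarrow> (\<And>p. p \<in> B \<Longrightarrow> h p = p) \<Longrightarrow> f h \<in> G"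
  using f_fixing_B G_inj by simp

lemma f_in_G_if_fixing_C: "h \<in> G \<Longrightarrow> (\<And>p. p \<in> C \<Longrightarrow> h p = p) \<Longrightarrow> f h \<in> G"
  using f_fixing_C G_inj G_comp G_inv_into \<delta>_in_G by simp

lemma in_G_if_fixing_C:
  assumes "inj h" "\<And>p. p \<in> C \<Longrightarrow> h p = p" "f h \<in> G"
  shows "h \<in> G"
proof -
  have "h = inv_into UNIV \<delta> \<circ> f h \<circ> \<delta>"
    using bij_is_inj[OF bij_\<delta>] by (simp add: f_fixing_C[OF assms(1,2)] comp_def)
  then show ?thesis
    using G_comp G_inv_into \<delta>_in_G assms(3) by metis
qed

lemma exists_conjugator_moving_C_into:
  assumes "vigorous G" "clopen_C W" "W \<noteq> {}"
  obtains h where "h \<in> G" "f h \<in> G" "h ` C \<subseteq> W"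
proof -
  have clopen_CD: "clopen_C (C \<union> D)" and clopen_BD: "clopen_C (B \<union> D)"
    using B_clopen C_clopen D_clopen clopen_C_Un by auto
  have C_CD: "C \<subset> C \<union> D" and D_CD: "D \<subset> C \<union> D" and D_BD: "D \<subset> B \<union> D"
    using B_nonempty C_nonempty D_nonempty disjoint_BC disjoint_BD disjoint_CD by auto
  consider "C \<subseteq> W" | "\<not> C \<subseteq> W" "W \<inter> (C \<union> D) \<noteq> {}" | "W \<subseteq> B"
    using UNIV_eq_BCD by blast
  then show ?thesis
  proof cases
    case 1
    then show ?thesis using that G_id f_id by auto
  next
    case 2
    then have "W \<inter> (C \<union> D) \<subset> C \<union> D" by blast
    then obtain h where h: "h \<in> G" "\<And>p. p \<notin> C \<union> D \<Longrightarrow> h p = p" "h ` C \<subseteq> W \<inter> (C \<union> D)"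
      using vigorousE[OF assms(1) clopen_CD C_clopen clopen_C_Int[OF assms(2) clopen_CD]
          C_nonempty 2(2) C_CD] by blast
    have "f h \<in> G"
      using f_in_G_if_fixing_B[OF h(1)] h(2) disjoint_BC disjoint_BD by blast
    then show ?thesis using that h by blast
  next
    case 3
    then have W_BD: "W \<subset> B \<union> D" using D_nonempty disjoint_BD by blast
    obtain h1 where h1: "h1 \<in> G" "\<And>p. p \<notin> C \<union> D \<Longrightarrow> h1 p = p" "h1 ` C \<subseteq> D"
      using vigorousE[OF assms(1) clopen_CD C_clopen D_clopen C_nonempty D_nonempty C_CD D_CD] by blast
    obtain h2 where h2: "h2 \<in> G" "\<And>p. p \<notin> B \<union> D \<Longrightarrow> h2 p = p" "h2 ` D \<subseteq> W"
      using vigorousE[OF assms(1) clopen_BD D_clopen assms(2) D_nonempty assms(3) D_BD W_BD] by blast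
    have "f h1 \<in> G"
      using f_in_G_if_fixing_B[OF h1(1)] h1(2) disjoint_BC disjoint_BD by blast
    moreover have "f h2 \<in> G"
      using f_in_G_if_fixing_C[OF h2(1)] h2(2) disjoint_BC disjoint_CD by blast
    ultimately have "f (h2 \<circ> h1) \<in> G"
      by (simp add: f_comp G_comp)
    moreover have "(h2 \<circ> h1) ` C \<subseteq> W"
      using h1(3) h2(3) by (auto simp flip: image_comp)
    ultimately show ?thesis
      using that G_comp[OF h1(1) h2(1)] by blast
  qed
qed

lemma f_in_G_if_small_support:
  assumes "vigorous G" "\<gamma> \<in> G" "A \<in> K_C" "supp \<gamma> \<subseteq> A"
  shows "f \<gamma> \<in> G"
proof -
  have "clopen_C (- A)" "- A \<noteq> {}"
    using assms(3) clopen_C_Compl by (auto simp: K_C_def)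
  then obtain h where h: "h \<in> G" "f h \<in> G" "h ` C \<subseteq> - A"
    using exists_conjugator_moving_C_into[OF assms(1)] by blast
  have surj_h: "surj h"
    using G_bij[OF h(1)] by (rule bij_is_surj)
  define \<rho> where "\<rho> = inv_into UNIV h \<circ> \<gamma> \<circ> h"
  have "\<rho> \<in> G"
    using G_comp G_inv_into h(1) assms(2) by (simp add: \<rho>_def)
  moreover have "\<rho> p = p" if "p \<in> C" for p
  proof -
    have "\<gamma> (h p) = h p"
      using h(3) that assms(4) by (auto simp: supp_def)
    then show ?thesis
      using G_inj[OF h(1)] by (simp add: \<rho>_def)
  qed
  ultimately have "f \<rho> \<in> G"
    by (rule f_in_G_if_fixing_C)
  have "\<gamma> = h \<circ> \<rho> \<circ> inv_into UNIV h"
    by (rule ext) (simp add: \<rho>_def surj_f_inv_f[OF surj_h])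
  then have "f \<gamma> = f h \<circ> f \<rho> \<circ> inv_into UNIV (f h)"
    by (metis f_comp f_inv_into G_bij h(1))
  then show ?thesis
    using G_comp G_inv_into h(2) \<open>f \<rho> \<in> G\<close> by metis
qed

lemma f_in_G:
  assumes "vigorous G" "gen_by_small_support G" "\<gamma> \<in> G"
  shows "f \<gamma> \<in> G"
proof -
  have "\<gamma> \<in> generate Homeo {g \<in> G. \<exists>A\<in>K_C. supp g \<subseteq> A}"
    using assms(3) by (rule eqset_imp_iff[OF assms(2)[unfolded gen_by_small_support_def], THEN iffD1])
  then show ?thesis
  proof (induction rule: generate.induct)
    case one
    show ?case
      using G_id by (simp only: one_Homeo f_id)
  next
    case (incl h)
    then obtain A where "h \<in> G" "A \<in> K_C" "supp h \<subseteq> A"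
      by blast
    then show ?case
      by (rule f_in_G_if_small_support[OF assms(1)])
  next
    case (inv h)
    then obtain A where "h \<in> G" "A \<in> K_C" "supp h \<subseteq> A"
      by blast
    moreover from this have "f h \<in> G"
      by (rule f_in_G_if_small_support[OF assms(1)])
    ultimately show ?case
      by (simp add: inv_Homeo G_carrier f_inv_into G_bij G_inv_into)
  next
    case (eng h1 h2)
    show ?case
      using G_comp[OF eng.IH] by (simp only: mult_Homeo f_comp)
  qed
qed

lemma in_G_if_preserving_C:
  assumes "vigorous G" "gen_by_small_support G" "inj \<gamma>" "\<gamma> ` C \<subseteq> C" "f \<gamma> \<in> G"
  shows "\<gamma> \<in> G"
proof -
  have bij_f\<gamma>: "bij (f \<gamma>)"
    using G_bij[OF assms(5)] .
  define \<kappa> where "\<kappa> = inv_into UNIV (f \<gamma>) \<circ> \<gamma>"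
  have f\<gamma>_C: "f \<gamma> p = \<gamma> p" if "p \<in> C" for p
  proof -
    have "p \<notin> B" "\<gamma> p \<notin> B"
      using that assms(4) disjoint_BC by blast+
    then show ?thesis
      using f_\<epsilon>[of \<gamma> p] \<epsilon>_notin_B by simp
  qed
  have \<kappa>_C: "\<kappa> p = p" if "p \<in> C" for p
    using f\<gamma>_C[OF that, symmetric] bij_is_inj[OF bij_f\<gamma>] by (simp add: \<kappa>_def)
  have "inj \<kappa>"
    unfolding \<kappa>_def using G_inj[OF G_inv_into[OF assms(5)]] assms(3) by (rule inj_compose)
  moreover have "f \<kappa> \<in> G"
  proof -
    have "f \<kappa> = inv_into UNIV (f (f \<gamma>)) \<circ> f \<gamma>"
      by (simp add: \<kappa>_def f_comp f_inv_into[OF bij_f\<gamma>])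
    then show ?thesis
      using G_comp[OF assms(5) G_inv_into[OF f_in_G[OF assms(1,2,5)]]] by simp
  qed
  ultimately have "\<kappa> \<in> G"
    using in_G_if_fixing_C \<kappa>_C by blast
  moreover have "\<gamma> = f \<gamma> \<circ> \<kappa>"
    by (rule ext) (simp add: \<kappa>_def bij_is_surj[OF bij_f\<gamma>] surj_f_inv_f)
  ultimately show ?thesis
    using G_comp[OF _ assms(5)] by metis
qed

lemma clopen_C_vimage_comp_\<epsilon>:
  assumes "h \<in> carrier Homeo" "clopen_C U"
  shows "clopen_C ((h \<circ> \<epsilon>) -` U)"
proof -
  have "(h \<circ> \<epsilon>) -` U = (C \<inter> h -` U) \<union> ((B \<union> D) \<inter> (h \<circ> \<delta>) -` U)"
  proof (rule Set.set_eqI)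
    fix q
    show "q \<in> (h \<circ> \<epsilon>) -` U \<longleftrightarrow> q \<in> (C \<inter> h -` U) \<union> ((B \<union> D) \<inter> (h \<circ> \<delta>) -` U)"
    proof (cases "q \<in> C")
      case True
      then have "q \<notin> B \<union> D" "\<epsilon> q = q"
        using disjoint_BC disjoint_CD \<epsilon>_notin_B by blast+
      then show ?thesis using True by simp
    next
      case False
      then have "q \<in> B \<union> D" using UNIV_eq_BCD by blast
      then show ?thesis using False \<epsilon>_BD by auto
    qed
  qed
  moreover have "h \<circ> \<delta> \<in> carrier Homeo"
    using assms(1) G_carrier[OF \<delta>_in_G] unfolding carrier_Homeo by (rule homeomorphic_map_compose[rotated])
  ultimately show ?thesis
    using assms B_clopen C_clopen D_clopen
    by (simp add: clopen_C_Un clopen_C_Int clopen_C_vimage)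
qed

lemma f_conj_\<epsilon>:
  assumes "bij \<sigma>" "\<And>p. p \<notin> range \<epsilon> \<Longrightarrow> \<sigma> p = p"
  shows "f (inv_into UNIV \<epsilon> \<circ> \<sigma> \<circ> \<epsilon>) = \<sigma>"
proof (rule f_eqI)
  fix q
  have "\<sigma> (\<epsilon> q) \<notin> - range \<epsilon>"
    by (rule inj_fixing_pointwise_notin[OF bij_is_inj[OF assms(1)]]) (simp_all add: assms(2))
  then show "\<sigma> (\<epsilon> q) = \<epsilon> ((inv_into UNIV \<epsilon> \<circ> \<sigma> \<circ> \<epsilon>) q)"
    by (simp add: f_inv_into_f)
qed (rule assms(2))

lemma inj_if_inj_f:
  assumes "inj (f \<gamma>)" shows "inj \<gamma>"
proof (rule injI)
  fix x y assume "\<gamma> x = \<gamma> y"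
  then have "f \<gamma> (\<epsilon> x) = f \<gamma> (\<epsilon> y)"
    by (simp add: f_\<epsilon>)
  then show "x = y"
    using assms inj_\<epsilon> by (simp add: inj_eq)
qed

lemma vimage_comp_\<epsilon>_nonempty:
  assumes "bij \<sigma>" "\<And>p. p \<notin> range \<epsilon> \<Longrightarrow> \<sigma> p = p" "U \<subseteq> range \<epsilon>" "U \<noteq> {}"
  shows "(\<sigma> \<circ> \<epsilon>) -` U \<noteq> {}"
proof -
  obtain y where "y \<in> U"
    using assms(4) by blast
  moreover obtain x where "\<sigma> x = y"
    using bij_is_surj[OF assms(1)] by (metis surjD)
  ultimately have "x \<in> range \<epsilon>"
    using assms(2,3) by (metis subsetD)
  then show ?thesis
    using \<open>\<sigma> x = y\<close> \<open>y \<in> U\<close> by auto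
qed

lemma f_preimage_in_G:
  assumes "vigorous G" "gen_by_small_support G" "\<sigma> \<in> G" "\<And>p. p \<notin> range \<epsilon> \<Longrightarrow> \<sigma> p = p"
  obtains \<gamma> where "\<gamma> \<in> G" "f \<gamma> = \<sigma>"
proof -
  have bij_\<sigma>: "bij \<sigma>"
    using G_bij[OF assms(3)] .
  define \<gamma> where "\<gamma> = inv_into UNIV \<epsilon> \<circ> \<sigma> \<circ> \<epsilon>"
  have f_\<gamma>: "f \<gamma> = \<sigma>"
    unfolding \<gamma>_def using bij_\<sigma> assms(4) by (rule f_conj_\<epsilon>)
  define T where "T = (\<sigma> \<circ> \<epsilon>) -` C"
  have "\<gamma> ` T \<subseteq> C"
    by (auto simp: T_def \<gamma>_def inv_\<epsilon>_C)
  have "clopen_C T"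
    unfolding T_def using G_carrier[OF assms(3)] C_clopen by (rule clopen_C_vimage_comp_\<epsilon>)
  have "T \<noteq> {}"
    unfolding T_def using C_nonempty disjoint_BC notin_B_in_range_\<epsilon>
    by (intro vimage_comp_\<epsilon>_nonempty[OF bij_\<sigma> assms(4)]) blast+
  moreover have "(\<sigma> \<circ> \<epsilon>) -` D \<noteq> {}"
    using D_nonempty disjoint_BD notin_B_in_range_\<epsilon>
    by (intro vimage_comp_\<epsilon>_nonempty[OF bij_\<sigma> assms(4)]) blast+
  then have "T \<subset> UNIV"
    using disjoint_CD by (auto simp: T_def)
  moreover have "C \<subset> UNIV"
    using B_nonempty disjoint_BC by blast
  ultimately obtain g where g: "g \<in> G" "g ` C \<subseteq> T"
    using vigorousE[OF assms(1) clopen_C_UNIV C_clopen \<open>clopen_C T\<close> C_nonempty] by metis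
  have "\<gamma> \<circ> g \<in> G"
  proof (rule in_G_if_preserving_C[OF assms(1,2)])
    show "f (\<gamma> \<circ> g) \<in> G"
      using G_comp f_in_G[OF assms(1,2) g(1)] assms(3) by (simp add: f_comp f_\<gamma>)
    then show "inj (\<gamma> \<circ> g)"
      using G_inj inj_if_inj_f by blast
    show "(\<gamma> \<circ> g) ` C \<subseteq> C"
      using g(2) \<open>\<gamma> ` T \<subseteq> C\<close> by (auto simp flip: image_comp)
  qed
  moreover have "\<gamma> = (\<gamma> \<circ> g) \<circ> inv_into UNIV g"
    by (rule ext) (simp add: bij_is_surj[OF G_bij[OF g(1)]] surj_f_inv_f)
  ultimately have "\<gamma> \<in> G"
    using G_comp G_inv_into g(1) by metis
  then show ?thesis
    using that f_\<gamma> by blast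
qed

lemma f_iso:
  assumes "vigorous G" "gen_by_small_support G"
  shows "f \<in> iso (Homeo\<lparr>carrier := G\<rparr>) (Homeo\<lparr>carrier := pstab G (- range \<epsilon>)\<rparr>)"
proof -
  have f_pstab: "f \<gamma> \<in> pstab G (- range \<epsilon>)" if "\<gamma> \<in> G" for \<gamma>
    using f_in_G[OF assms that] by (simp add: pstab_def f_apply)
  have "f ` G = pstab G (- range \<epsilon>)"
  proof
    show "f ` G \<subseteq> pstab G (- range \<epsilon>)"
      using f_pstab by blast
    show "pstab G (- range \<epsilon>) \<subseteq> f ` G"
    proof
      fix \<sigma> assume "\<sigma> \<in> pstab G (- range \<epsilon>)"
      then obtain \<gamma> where "\<gamma> \<in> G" "f \<gamma> = \<sigma>"
        using f_preimage_in_G[OF assms, of \<sigma>] by (auto simp: pstab_def)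
      then show "\<sigma> \<in> f ` G" by blast
    qed
  qed
  then show ?thesis
    using f_pstab inj_on_subset[OF inj_f]
    by (auto simp: iso_def hom_def bij_betw_def Homeo_def f_comp)
qed

end

theorem lemma2p10:
  fixes G :: "(cpt \<Rightarrow> cpt) set" and B C D :: "cpt set" and \<delta> \<epsilon> :: "cpt \<Rightarrow> cpt"
    and f :: "(cpt \<Rightarrow> cpt) \<Rightarrow> (cpt \<Rightarrow> cpt)"
  assumes "subgroup G Homeo" and "vigorous G" and "gen_by_small_support G"
    and "B \<in> K_C" and "C \<in> K_C" and "D \<in> K_C"
    and "B \<inter> C = {}" and "B \<inter> D = {}" and "C \<inter> D = {}"
    and "B \<union> C \<union> D = topspace cantor"
    and "\<delta> \<in> pstab G D" and "\<delta> ` B \<subset> B"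
    and "\<epsilon> = (\<lambda>p. if p \<in> B then \<delta> p else p)"
    and "f = (\<lambda>\<gamma> p. if p \<in> range \<epsilon> then \<epsilon> (\<gamma> (inv_into UNIV \<epsilon> p)) else p)"
  shows "f \<in> iso (Homeo\<lparr>carrier := G\<rparr>) (Homeo\<lparr>carrier := pstab G (- range \<epsilon>)\<rparr>)"
proof -
  have "\<delta> ` B \<subseteq> B"
    using assms(12) by blast
  interpret eps_conjugation G B C D \<delta> \<epsilon> f
    using assms(1,4-11) \<open>\<delta> ` B \<subseteq> B\<close> assms(13,14) by (rule eps_conjugation.intro)
  show ?thesis
    using f_iso assms(2,3) .
qed

end
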